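(* Let $\mathbb F=(\mathcal F_t)_{t\ge0}$ be a filtration and $\mathbb T=\{t_0,t_1,\dots,t_n\}$ with $0=t_0<t_1<\dots<t_n=\infty$ such that $\mathcal F_t=\mathcal F_{t_{i(t)}}$ for all $t\ge0$, where $i(t)=\max\{i:t_i\le t\}$. Let $\tau$ be an $(\mathbb F,\mathbb T)$-stopping time, let $\gamma>0$, and define $U_t=e^{-\gamma t}\mathbf 1_{\{t<\tau\}}$. Then there exists a proper solution $W$ associated to $(h_{EZ},U,\mathbb F)$ such that $$W_t\ge\Big(\frac{1}{\gamma\theta}\mathbb E\big[e^{-\gamma t}-e^{-\gamma(t\vee\tau)}\,\big|\,\mathcal F_t\big]\Big)^\theta\quad\text{for all }t\ge0.$$
   Context: Let $(\Omega,\mathcal F,\mathbb P)$ be a probability space. $\theta>1$ is fixed and $\rho=\frac{\theta-1}{\theta}$; $h_{EZ}(u,w)=uw^\rho$. An $(\mathbb F,\mathbb T)$-stopping time is an $\mathbb F$-stopping time $\tau$ that can be written as $\tau=\sum_{i=0}^n t_i\mathbf 1_{A_i}$ for disjoint sets $A_0,\dots,A_n$ with $A_i\in\mathcal F_{t_i}$ and $\mathbb P(\bigcup_iA_i)=1$. For a nonnegative $\mathbb F$-progressively measurable $U$, a solution associated to $(h_{EZ},U,\mathbb F)$ is a nonnegative càdlàg $\mathbb F$-progressively measurable $W$ with $\mathbb E\int_0^\infty U_sW_s^\rho ds<\infty$ and $W_t=\mathbb E[\int_t^\infty U_sW_s^\rho ds\mid\mathcal F_t]$ for all $t\ge0$;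 it is proper if for every $t\ge0$, up to null sets, $W_t>0$ on $\{\mathbb E[\int_t^\infty U_s^\theta ds\mid\mathcal F_t]>0\}$. *)

theory Defs
  imports "HOL-Probability.Probability"
begin

definition filtration_on :: "'a measure \<Rightarrow> (real \<Rightarrow> 'a measure) \<Rightarrow> bool" where
  "filtration_on M F \<longleftrightarrow>
     (\<forall>t\<ge>0. subalgebra M (F t)) \<and> (\<forall>s t. 0 \<le> s \<longrightarrow> s \<le> t \<longrightarrow> sets (F s) \<subseteq> sets (F t))"

definition prog_measurable :: "'a measure \<Rightarrow> (real \<Rightarrow> 'a measure) \<Rightarrow> (real \<Rightarrow> 'a \<Rightarrow> real) \<Rightarrow> bool" where
  "prog_measurable M F X \<longleftrightarrow>
     (\<forall>t\<ge>0. (\<lambda>(s, x). X s x) \<in> borel_measurable (restrict_space borel {0..t} \<Otimes>\<^sub>M F t))"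

definition cadlag_on :: "'a measure \<Rightarrow> (real \<Rightarrow> 'a \<Rightarrow> real) \<Rightarrow> bool" where
  "cadlag_on M X \<longleftrightarrow>
     (\<forall>x\<in>space M. \<forall>t\<ge>0. continuous (at_right t) (\<lambda>s. X s x) \<and>
        (0 < t \<longrightarrow> (\<exists>l. ((\<lambda>s. X s x) \<longlongrightarrow> l) (at_left t))))"

definition h_EZ :: "real \<Rightarrow> real \<Rightarrow> real \<Rightarrow> real" where
  "h_EZ \<theta> u w = u * w powr ((\<theta> - 1) / \<theta>)"

definition EZ_solution ::
  "'a measure \<Rightarrow> (real \<Rightarrow> 'a measure) \<Rightarrow> real \<Rightarrow> (real \<Rightarrow> 'a \<Rightarrow> real) \<Rightarrow> (real \<Rightarrow> 'a \<Rightarrow> real) \<Rightarrow> bool" where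
  "EZ_solution M F \<theta> U W \<longleftrightarrow>
     (\<forall>t\<ge>0. \<forall>x\<in>space M. 0 \<le> W t x) \<and> cadlag_on M W \<and> prog_measurable M F W \<and>
     (\<integral>\<^sup>+ x. (\<integral>\<^sup>+ s. ennreal (indicator {0..} s * h_EZ \<theta> (U s x) (W s x)) \<partial>lborel) \<partial>M) < \<infinity> \<and>
     (\<forall>t\<ge>0. AE x in M. ennreal (W t x) =
        nn_cond_exp M (F t) (\<lambda>y. \<integral>\<^sup>+ s. ennreal (indicator {t..} s * h_EZ \<theta> (U s y) (W s y)) \<partial>lborel) x)"

definition proper_EZ_solution ::
  "'a measure \<Rightarrow> (real \<Rightarrow> 'a measure) \<Rightarrow> real \<Rightarrow> (real \<Rightarrow> 'a \<Rightarrow> real) \<Rightarrow> (real \<Rightarrow> 'a \<Rightarrow> real) \<Rightarrow> bool" where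
  "proper_EZ_solution M F \<theta> U W \<longleftrightarrow> EZ_solution M F \<theta> U W \<and>
     (\<forall>t\<ge>0. AE x in M.
        0 < nn_cond_exp M (F t) (\<lambda>y. \<integral>\<^sup>+ s. ennreal (indicator {t..} s * U s y powr \<theta>) \<partial>lborel) x
        \<longrightarrow> 0 < W t x)"

text \<open>(F,T)-stopping time, T = {tt 0, ..., tt n} with tt n = \<infinity>; values in [0,\<infinity>].
  tau = sum_i tt i * 1_{A i}: tau = tt i on A i, tau = 0 off the union of the A i.\<close>
definition FT_stopping_time ::
  "'a measure \<Rightarrow> (real \<Rightarrow> 'a measure) \<Rightarrow> (nat \<Rightarrow> ereal) \<Rightarrow> nat \<Rightarrow> ('a \<Rightarrow> ereal) \<Rightarrow> bool" where
  "FT_stopping_time M F tt n \<tau> \<longleftrightarrow>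
     (\<forall>t\<ge>0. {x \<in> space M. \<tau> x \<le> ereal t} \<in> sets (F t)) \<and>
     (\<exists>A :: nat \<Rightarrow> 'a set.
        (\<forall>i<n. A i \<in> sets (F (real_of_ereal (tt i)))) \<and> A n \<in> sets M \<and>
        disjoint_family_on A {0..n} \<and>
        measure M (\<Union>i\<in>{0..n}. A i) = 1 \<and>
        (\<forall>i\<le>n. \<forall>x\<in>A i \<inter> space M. \<tau> x = tt i) \<and>
        (\<forall>x\<in>space M - (\<Union>i\<in>{0..n}. A i). \<tau> x = 0))"

end

theory Submission
  imports Defs
begin

(* On each segment [t_i, t_(i+1)) of the grid the filtration is constant, so the solution can be
   written down explicitly.  With kappa = 1/(gamma theta),
     W_t^(1/theta) = c_i^(1/theta) + kappa (e^(-gamma t) - e^(-gamma t_(i+1))) 1_(tau > t_i),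
   where the F_(t_i)-measurable continuation value c_i = E[W_(t_(i+1)) | F_(t_i)] is computed
   backwards from c_(n-1) = 0.  On the segment U_s W_s^rho is the derivative of -W_s, so the
   utility collected from t up to t_(i+1) is W_t - c_i and the recursive equation follows from
   the tower property; W_t > 0 exactly where tau > t_i, which gives properness.
   The lower bound splits in the same way into the segment term and
   kappa E[e^(-gamma t_(i+1)) - e^(-gamma (t_(i+1) max tau)) | F_(t_i)], which is at most
   c_i^(1/theta) by backward induction and Jensen's inequality for x^theta. *)

section \<open>Real analysis\<close>

definition discount :: "real \<Rightarrow> ereal \<Rightarrow> real" where
  "discount \<gamma> T = (case T of ereal y \<Rightarrow> exp (- \<gamma> * y) | _ \<Rightarrow> 0)"

lemma discount_nonneg: "0 \<le> discount \<gamma> T"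
  unfolding discount_def by (cases T) auto

lemma discount_le_exp: "0 < \<gamma> \<Longrightarrow> ereal s \<le> T \<Longrightarrow> discount \<gamma> T \<le> exp (- \<gamma> * s)"
  unfolding discount_def by (cases T) auto

lemma discount_less_exp: "0 < \<gamma> \<Longrightarrow> ereal s < T \<Longrightarrow> discount \<gamma> T < exp (- \<gamma> * s)"
  unfolding discount_def by (cases T) auto

lemma tendsto_powr_discount_at_left:
  fixes \<gamma> \<theta> \<kappa> C :: real and T :: ereal
  assumes "0 < \<gamma>" "0 < \<theta>" "0 \<le> \<kappa>" "0 \<le> C"
  shows "(((\<lambda>s. (C + \<kappa> * (exp (- \<gamma> * s) - discount \<gamma> T)) powr \<theta>) \<circ> real_of_ereal) \<longlongrightarrow> C powr \<theta>) (at_left T)"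
proof (cases T)
  case (real y)
  have "((\<lambda>s. C + \<kappa> * (exp (- \<gamma> * s) - exp (- \<gamma> * y))) \<longlongrightarrow> C) (at_left y)"
    by (auto intro!: tendsto_eq_intros)
  moreover have "\<forall>\<^sub>F s in at_left y. 0 \<le> C + \<kappa> * (exp (- \<gamma> * s) - exp (- \<gamma> * y))"
    using assms by (intro eventually_at_leftI[of "y - 1"]) auto
  ultimately have "((\<lambda>s. (C + \<kappa> * (exp (- \<gamma> * s) - exp (- \<gamma> * y))) powr \<theta>) \<longlongrightarrow> C powr \<theta>) (at_left y)"
    using assms by (intro tendsto_powr2) auto
  then show ?thesis
    using real by (simp add: ereal_tendsto_simps1 discount_def)
next
  case PInf
  have "filterlim (\<lambda>s. \<gamma> * s) at_top at_top"
    using assms(1) by (intro filterlim_tendsto_pos_mult_at_top[OF tendsto_const] filterlim_ident) auto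
  then have "filterlim (\<lambda>s. - \<gamma> * s) at_bot at_top"
    by (simp add: filterlim_uminus_at_bot)
  then have "((\<lambda>s. exp (- \<gamma> * s)) \<longlongrightarrow> 0) at_top"
    by (rule filterlim_compose[OF exp_at_bot])
  then have "((\<lambda>s. C + \<kappa> * (exp (- \<gamma> * s) - 0)) \<longlongrightarrow> C + \<kappa> * (0 - 0)) at_top"
    by (intro tendsto_intros)
  moreover have "\<forall>\<^sub>F s in at_top. 0 \<le> C + \<kappa> * (exp (- \<gamma> * s) - 0)"
    using assms by simp
  ultimately have "((\<lambda>s. (C + \<kappa> * (exp (- \<gamma> * s) - 0)) powr \<theta>) \<longlongrightarrow> C powr \<theta>) at_top"
    using assms by (intro tendsto_powr2) auto
  then show ?thesis
    using PInf by (simp add: ereal_tendsto_simps1 discount_def)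
next
  case MInf
  then show ?thesis
    using trivial_limit_at_left_bot[where 'a = ereal] by (simp add: bot_ereal_def)
qed

text \<open>The normalisation \<open>\<kappa> = 1 / (\<gamma> \<theta>)\<close> is what makes the derivative of \<open>-B\<^sup>\<theta>\<close> the
  Epstein-Zin utility rate \<open>e\<^sup>-\<^sup>\<gamma>\<^sup>s B\<^sup>\<theta>\<^sup>-\<^sup>1\<close>.\<close>
lemma has_real_derivative_neg_powr_discounted:
  fixes \<gamma> \<theta> \<kappa> C d s :: real
  assumes "0 < \<gamma>" "1 < \<theta>" "\<kappa> = 1 / (\<gamma> * \<theta>)" "0 < C + \<kappa> * (exp (- \<gamma> * s) - d)"
  shows "((\<lambda>s. - ((C + \<kappa> * (exp (- \<gamma> * s) - d)) powr \<theta>)) has_real_derivative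
           exp (- \<gamma> * s) * (C + \<kappa> * (exp (- \<gamma> * s) - d)) powr (\<theta> - 1)) (at s)"
proof -
  define B where "B s = C + \<kappa> * (exp (- \<gamma> * s) - d)" for s
  have "(B has_real_derivative \<kappa> * (- \<gamma> * exp (- \<gamma> * s))) (at s)"
    unfolding B_def by (auto intro!: derivative_eq_intros)
  from DERIV_fun_powr[OF this, of \<theta>] assms(4)
  have "((\<lambda>s. B s powr \<theta>) has_real_derivative
           \<theta> * B s powr (\<theta> - 1) * (\<kappa> * (- \<gamma> * exp (- \<gamma> * s)))) (at s)"
    unfolding B_def by simp
  then have "((\<lambda>s. - (B s powr \<theta>)) has_real_derivative
           - (\<theta> * B s powr (\<theta> - 1) * (\<kappa> * (- \<gamma> * exp (- \<gamma> * s))))) (at s)"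
    by (rule derivative_intros)
  moreover have "- (\<theta> * B s powr (\<theta> - 1) * (\<kappa> * (- \<gamma> * exp (- \<gamma> * s)))) =
      exp (- \<gamma> * s) * B s powr (\<theta> - 1)"
    using assms by (simp add: field_simps)
  ultimately show ?thesis
    unfolding B_def by (rule DERIV_cong)
qed

lemma nn_integral_exp_powr_segment:
  fixes \<gamma> \<theta> \<kappa> C t :: real and T :: ereal
  assumes "0 < \<gamma>" "1 < \<theta>" "\<kappa> = 1 / (\<gamma> * \<theta>)" "0 \<le> C" "ereal t < T"
  shows "(\<integral>\<^sup>+ s. ennreal (indicator {s. t \<le> s \<and> ereal s < T} s *
            (exp (- \<gamma> * s) * (C + \<kappa> * (exp (- \<gamma> * s) - discount \<gamma> T)) powr (\<theta> - 1))) \<partial>lborel)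
       = ennreal ((C + \<kappa> * (exp (- \<gamma> * t) - discount \<gamma> T)) powr \<theta> - C powr \<theta>)"
proof -
  define B where "B s = C + \<kappa> * (exp (- \<gamma> * s) - discount \<gamma> T)" for s
  define f where "f s = exp (- \<gamma> * s) * B s powr (\<theta> - 1)" for s
  define Fn where "Fn s = - (B s powr \<theta>)" for s
  have B_pos: "0 < B s" if "ereal s < T" for s
    using discount_less_exp[OF assms(1) that] assms unfolding B_def by (simp add: add_nonneg_pos)
  have B_cont: "continuous_on UNIV B"
    unfolding B_def by (intro continuous_intros)
  have Fn_deriv: "DERIV Fn s :> f s" if "ereal t < ereal s" "ereal s < T" for s
    using has_real_derivative_neg_powr_discounted[OF assms(1-3) B_pos[OF that(2), unfolded B_def]]
    unfolding Fn_def f_def B_def .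
  have f_cont: "isCont f s" if "ereal t < ereal s" "ereal s < T" for s
    unfolding f_def using B_pos[OF that(2)] B_cont
    by (auto intro!: continuous_intros simp: continuous_on_eq_continuous_at)
  have f_nonneg: "AE s in lborel. ereal t < ereal s \<longrightarrow> ereal s < T \<longrightarrow> 0 \<le> f s"
    unfolding f_def by auto
  have lim_at_t: "((Fn \<circ> real_of_ereal) \<longlongrightarrow> Fn t) (at_right (ereal t))"
  proof -
    have "isCont Fn t"
      unfolding Fn_def using B_pos[OF assms(5)] B_cont
      by (auto intro!: continuous_intros simp: continuous_on_eq_continuous_at)
    then show ?thesis
      by (simp add: ereal_tendsto_simps1 filterlim_at_split isCont_def)
  qed
  have "0 \<le> \<kappa>"
    using assms by simp
  from tendsto_minus[OF tendsto_powr_discount_at_left[OF assms(1) _ this assms(4)]]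
  have lim_at_T: "((Fn \<circ> real_of_ereal) \<longlongrightarrow> - (C powr \<theta>)) (at_left T)"
    using assms(2) unfolding Fn_def B_def comp_def by simp
  note FTC = interval_integral_FTC_nonneg[OF assms(5) Fn_deriv f_cont f_nonneg lim_at_t lim_at_T]
  have "integrable lborel (\<lambda>s. indicator (einterval t T) s * f s)"
    using FTC(1) unfolding set_integrable_def by simp
  moreover have "(\<integral>s. indicator (einterval t T) s * f s \<partial>lborel) = B t powr \<theta> - C powr \<theta>"
    using FTC(2) assms(5)
    unfolding interval_lebesgue_integral_def set_lebesgue_integral_def Fn_def by (simp add: less_imp_le)
  ultimately have "(\<integral>\<^sup>+ s. ennreal (indicator (einterval t T) s * f s) \<partial>lborel) = ennreal (B t powr \<theta> - C powr \<theta>)"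
    by (subst nn_integral_eq_integral) (auto simp: f_def indicator_def)
  moreover have "(\<integral>\<^sup>+ s. ennreal (indicator {s. t \<le> s \<and> ereal s < T} s * f s) \<partial>lborel)
      = (\<integral>\<^sup>+ s. ennreal (indicator (einterval t T) s * f s) \<partial>lborel)"
    by (rule nn_integral_cong_AE, use AE_lborel_singleton[of t] in eventually_elim)
       (auto simp: einterval_iff indicator_def)
  ultimately show ?thesis
    unfolding f_def B_def by simp
qed

lemma eventually_at_right_less_ereal:
  "ereal t < T \<Longrightarrow> \<forall>\<^sub>F s in at_right t. t < s \<and> ereal s < T"
proof (cases T)
  case (real b)
  then show "ereal t < T \<Longrightarrow> ?thesis"
    using eventually_at_right_real[of t b] by (auto elim: eventually_mono)
qed (use eventually_at_right_less[of t] in simp_all)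

lemma powr_le_self:
  fixes t p :: real
  assumes "0 \<le> t" "t \<le> 1" "1 \<le> p"
  shows "t powr p \<le> t"
proof (cases "t = 0")
  case False
  then have "t powr p = t * t powr (p - 1)"
    using assms by (simp add: powr_mult_base)
  also have "\<dots> \<le> t * 1"
    using assms powr_le1[of "p - 1" t] by (intro mult_left_mono) auto
  finally show ?thesis by simp
qed simp

lemma convex_on_nonneg_powr:
  fixes p :: real
  assumes "1 \<le> p"
  shows "convex_on {0..} (\<lambda>x. x powr p)"
proof (rule convex_onI)
  fix t a b :: real assume t: "0 < t" "t < 1" and ab: "a \<in> {0..}" "b \<in> {0..}"
  consider "0 < a" "0 < b" | "a = 0" | "b = 0" using ab by force
  then show "((1 - t) *\<^sub>R a + t *\<^sub>R b) powr p \<le> (1 - t) * a powr p + t * b powr p"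
  proof cases
    case 1
    then show ?thesis using convex_onD[OF powr_convex[OF assms], of t a b] t by simp
  next
    case 2
    have "(t * b) powr p = t powr p * b powr p" using t ab by (simp add: powr_mult)
    also have "\<dots> \<le> t * b powr p" using powr_le_self[of t p] t assms by (intro mult_right_mono) auto
    finally show ?thesis using 2 by simp
  next
    case 3
    have "((1 - t) * a) powr p = (1 - t) powr p * a powr p" using t ab by (simp add: powr_mult)
    also have "\<dots> \<le> (1 - t) * a powr p" using powr_le_self[of "1 - t" p] t assms by (intro mult_right_mono) auto
    finally show ?thesis using 3 by simp
  qed
qed simp

lemma convex_on_max_0_powr:
  fixes p :: real
  assumes "1 \<le> p"
  shows "convex_on UNIV (\<lambda>z. max z 0 powr p)"
proof (rule convex_onI)
  fix t x y :: real assume t: "0 < t" "t < 1"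
  have "max ((1 - t) *\<^sub>R x + t *\<^sub>R y) 0 \<le> (1 - t) * max x 0 + t * max y 0"
    using t by (auto intro!: add_mono mult_left_mono)
  then have "max ((1 - t) *\<^sub>R x + t *\<^sub>R y) 0 powr p \<le> ((1 - t) *\<^sub>R max x 0 + t *\<^sub>R max y 0) powr p"
    using t assms by (intro powr_mono2) auto
  also have "\<dots> \<le> (1 - t) * max x 0 powr p + t * max y 0 powr p"
    using convex_onD[OF convex_on_nonneg_powr[OF assms], of t "max x 0" "max y 0"] t by simp
  finally show "max ((1 - t) *\<^sub>R x + t *\<^sub>R y) 0 powr p \<le> (1 - t) * max x 0 powr p + t * max y 0 powr p" .
qed simp

section \<open>Conditional expectations and measurability\<close>

lemma nn_cond_exp_cong_sets:
  "subalgebra M A \<Longrightarrow> subalgebra M B \<Longrightarrow> sets A = sets B \<Longrightarrow> nn_cond_exp M A = nn_cond_exp M B"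
  unfolding nn_cond_exp_def restr_to_subalg_def subalgebra_def by (simp add: fun_eq_iff)

lemma real_cond_exp_cong_sets:
  assumes "subalgebra M A" "subalgebra M B" "sets A = sets B"
  shows "real_cond_exp M A = real_cond_exp M B"
  using nn_cond_exp_cong_sets[OF assms] unfolding real_cond_exp_def by (simp add: fun_eq_iff)

lemma measurable_pair_subalgebra:
  assumes "subalgebra A B" "g \<in> borel_measurable (N \<Otimes>\<^sub>M B)"
  shows "g \<in> borel_measurable (N \<Otimes>\<^sub>M A)"
proof -
  have "snd \<in> measurable (N \<Otimes>\<^sub>M A) B"
    using measurable_snd[of N A] assms(1) unfolding subalgebra_def measurable_def by auto
  then have "(\<lambda>p. p) \<in> measurable (N \<Otimes>\<^sub>M A) (N \<Otimes>\<^sub>M B)"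
    unfolding measurable_pair_iff by (simp add: o_def)
  from measurable_compose[OF this assms(2)] show ?thesis by simp
qed

lemma measurable_nn_integral_lborel:
  fixes f :: "real \<Rightarrow> 'a \<Rightarrow> ennreal"
  assumes "(\<lambda>p. f (fst p) (snd p)) \<in> borel_measurable (borel \<Otimes>\<^sub>M M)"
  shows "(\<lambda>x. \<integral>\<^sup>+ s. f s x \<partial>lborel) \<in> borel_measurable M"
proof -
  have "(\<lambda>(x, s). f s x) \<in> borel_measurable (M \<Otimes>\<^sub>M borel)"
    using assms by (subst (asm) measurable_pair_swap_iff) (simp add: case_prod_beta)
  moreover have "sets (M \<Otimes>\<^sub>M lborel) = sets (M \<Otimes>\<^sub>M borel)"
    by (rule sets_pair_measure_cong) simp_all
  ultimately have "(\<lambda>(x, s). f s x) \<in> borel_measurable (M \<Otimes>\<^sub>M lborel)"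
    by (simp cong: measurable_cong_sets)
  then show ?thesis
    by (rule lborel.borel_measurable_nn_integral)
qed

context sigma_finite_subalgebra
begin

lemma nn_cond_exp_eq_real_cond_exp:
  assumes [measurable]: "g \<in> borel_measurable M" and "\<And>x. x \<in> space M \<Longrightarrow> 0 \<le> g x \<and> g x \<le> B"
  shows "AE x in M. nn_cond_exp M F (\<lambda>x. ennreal (g x)) x = ennreal (real_cond_exp M F g x)"
proof -
  have "AE x in M. nn_cond_exp M F (\<lambda>x. ennreal (- g x)) x = nn_cond_exp M F (\<lambda>x. 0) x"
    by (rule nn_cond_exp_cong) (use assms in \<open>auto simp: ennreal_eq_0_iff\<close>)
  moreover have "AE x in M. 0 = nn_cond_exp M F (\<lambda>x. 0) x"
    by (rule nn_cond_exp_F_meas) simp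
  moreover have "AE x in M. nn_cond_exp M F (\<lambda>x. ennreal (g x)) x \<le> nn_cond_exp M F (\<lambda>x. ennreal B) x"
    by (rule nn_cond_exp_mono) (use assms in \<open>auto intro: ennreal_leI\<close>)
  moreover have "AE x in M. ennreal B = nn_cond_exp M F (\<lambda>x. ennreal B) x"
    by (rule nn_cond_exp_F_meas) simp
  ultimately show ?thesis
  proof eventually_elim
    case (elim x)
    then have "nn_cond_exp M F (\<lambda>x. ennreal (g x)) x < \<top>"
      by (metis ennreal_less_top order_le_less_trans)
    then show ?case using elim unfolding real_cond_exp_def by simp
  qed
qed

text \<open>Jensen's inequality for \<open>x \<mapsto> x\<^sup>p\<close>; the library version needs an open interval, so the
  power is extended by \<open>0\<close> to the negative axis.\<close>
lemma real_cond_exp_powr_le: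
  assumes X: "integrable M X" "\<And>x. x \<in> space M \<Longrightarrow> 0 \<le> X x"
    and Xp: "integrable M (\<lambda>x. X x powr p)" and p: "1 \<le> p"
  shows "AE x in M. real_cond_exp M F X x powr p \<le> real_cond_exp M F (\<lambda>x. X x powr p) x"
proof -
  define q where "q z = max z 0 powr p" for z :: real
  have qX: "x \<in> space M \<Longrightarrow> q (X x) = X x powr p" for x
    using X(2) unfolding q_def by (simp add: max_absorb1)
  have [measurable]: "X \<in> borel_measurable M" "q \<in> borel_measurable borel"
    using X(1) unfolding q_def by auto
  have "integrable M (\<lambda>x. q (X x))"
    using Xp Bochner_Integration.integrable_cong[OF refl qX, of M] by simp
  moreover have "convex_on UNIV q"
    unfolding q_def by (rule convex_on_max_0_powr[OF p])
  ultimately have "AE x in M. q (real_cond_exp M F X x) \<le> real_cond_exp M F (\<lambda>x. q (X x)) x"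
    by (intro real_cond_exp_jensens_inequality(2)[OF X(1)]) auto
  moreover have "AE x in M. real_cond_exp M F (\<lambda>x. q (X x)) x = real_cond_exp M F (\<lambda>x. X x powr p) x"
    by (rule real_cond_exp_cong) (auto simp: qX)
  moreover have "AE x in M. 0 \<le> real_cond_exp M F X x"
    by (rule real_cond_exp_pos) (use X in auto)
  ultimately show ?thesis
    by eventually_elim (simp add: q_def max_absorb1)
qed

end

section \<open>The time grid and the stopping time\<close>

function backward_rec :: "nat \<Rightarrow> (nat \<Rightarrow> 'b \<Rightarrow> 'b) \<Rightarrow> 'b \<Rightarrow> nat \<Rightarrow> 'b" where
  "backward_rec n step z i = (if Suc i < n then step i (backward_rec n step z (Suc i)) else z)"
  by auto
termination
  by (relation "Wellfounded.measure (\<lambda>(n, _, _, i). n - i)") auto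

declare backward_rec.simps [simp del]

locale EZ_grid = prob_space M
  for M :: "'a measure" +
  fixes F :: "real \<Rightarrow> 'a measure" and tt :: "nat \<Rightarrow> ereal" and n :: nat
    and \<tau> :: "'a \<Rightarrow> ereal" and \<theta> \<gamma> :: real
  assumes theta_gt_1: "\<theta> > 1"
    and filtration: "filtration_on M F"
    and tt_0: "tt 0 = 0" and tt_step: "\<forall>i<n. tt i < tt (Suc i)" and tt_n: "tt n = \<infinity>"
    and F_piecewise_const: "\<forall>s\<ge>0. \<forall>i<n. tt i \<le> ereal s \<and> ereal s < tt (Suc i) \<longrightarrow>
          sets (F s) = sets (F (real_of_ereal (tt i)))"
    and stopping_time: "FT_stopping_time M F tt n \<tau>"
    and gamma_pos: "\<gamma> > 0"
begin

lemma n_pos: "0 < n"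
  using tt_0 tt_n by (cases n) auto

lemma tt_strict_mono: "i < j \<Longrightarrow> j \<le> n \<Longrightarrow> tt i < tt j"
proof (induction j)
  case (Suc j)
  then show ?case
    using tt_step by (cases "i = j") (auto intro: order.strict_trans)
qed simp

lemma tt_mono: "i \<le> j \<Longrightarrow> j \<le> n \<Longrightarrow> tt i \<le> tt j"
  using tt_strict_mono by (cases "i = j") (auto intro: less_imp_le)

lemma tt_nonneg: "i \<le> n \<Longrightarrow> 0 \<le> tt i"
  using tt_mono[of 0 i] tt_0 by simp

definition grid :: "nat \<Rightarrow> real" where
  "grid i = real_of_ereal (tt i)"

lemma tt_eq_grid: "i < n \<Longrightarrow> tt i = ereal (grid i)"
  using tt_strict_mono[of i n] tt_n tt_nonneg[of i] unfolding grid_def by (cases "tt i") auto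

lemma grid_nonneg: "i < n \<Longrightarrow> 0 \<le> grid i"
  using tt_eq_grid[of i] tt_nonneg[of i] by simp

lemma grid_mono: "i \<le> j \<Longrightarrow> j < n \<Longrightarrow> grid i \<le> grid j"
  using tt_mono[of i j] tt_eq_grid[of i] tt_eq_grid[of j] by simp

definition seg :: "nat \<Rightarrow> real set" where
  "seg i = {s. tt i \<le> ereal s \<and> ereal s < tt (Suc i)}"

lemma seg_nonneg: "i < n \<Longrightarrow> s \<in> seg i \<Longrightarrow> 0 \<le> s"
  using order_trans[OF tt_nonneg[of i], of "ereal s"] unfolding seg_def by simp

lemma grid_in_seg: "i < n \<Longrightarrow> grid i \<in> seg i"
  using tt_eq_grid[of i] tt_step unfolding seg_def by auto

lemma in_seg_after: "t \<in> seg i \<Longrightarrow> t \<le> s \<Longrightarrow> ereal s < tt (Suc i) \<Longrightarrow> s \<in> seg i"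
  using order_trans[of "tt i" "ereal t" "ereal s"] unfolding seg_def by simp

lemma seg_exists:
  assumes "0 \<le> s"
  obtains i where "i < n" "s \<in> seg i"
proof (rule ccontr)
  assume "\<not> thesis"
  with that have none: "s \<notin> seg i" if "i < n" for i
    using \<open>i < n\<close> by blast
  have "tt i \<le> ereal s" if "i \<le> n" for i
    using that
  proof (induction i)
    case 0
    then show ?case using assms tt_0 by simp
  next
    case (Suc i)
    with none[of i] show ?case
      unfolding seg_def by auto
  qed
  from this[of n] show False
    using tt_n by simp
qed

lemma seg_left_exists:
  assumes "0 < s"
  obtains j where "j < n" "tt j < ereal s" "ereal s \<le> tt (Suc j)"
proof (rule ccontr)
  assume "\<not> thesis"
  with that have none: "\<not> (tt j < ereal s \<and> ereal s \<le> tt (Suc j))" if "j < n" for j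
    using \<open>j < n\<close> by blast
  have "tt i < ereal s" if "i \<le> n" for i
    using that
  proof (induction i)
    case 0
    then show ?case using assms tt_0 by simp
  next
    case (Suc i)
    with none[of i] show ?case
      by auto
  qed
  from this[of n] show False
    using tt_n by simp
qed

lemma seg_unique:
  assumes "i < n" "j < n" "s \<in> seg i" "s \<in> seg j"
  shows "i = j"
proof (rule ccontr)
  assume "i \<noteq> j"
  then consider "i < j" | "j < i" by linarith
  then show False
  proof cases
    case 1
    then have "tt (Suc i) \<le> tt j" using tt_mono assms by simp
    then show False using assms unfolding seg_def by auto
  next
    case 2
    then have "tt (Suc j) \<le> tt i" using tt_mono assms by simp
    then show False using assms unfolding seg_def by auto
  qed
qed

lemma subalgebra_F: "0 \<le> t \<Longrightarrow> subalgebra M (F t)"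
  using filtration unfolding filtration_on_def by auto

lemma sets_F_mono: "0 \<le> s \<Longrightarrow> s \<le> t \<Longrightarrow> sets (F s) \<subseteq> sets (F t)"
  using filtration unfolding filtration_on_def by auto

lemma space_F: "0 \<le> t \<Longrightarrow> space (F t) = space M"
  using subalgebra_F unfolding subalgebra_def by auto

lemma sigma_finite_subalgebra_F: "0 \<le> t \<Longrightarrow> sigma_finite_subalgebra M (F t)"
  using subalgebra_F finite_measure_subalgebra_is_sigma_finite finite_measure_axioms
  unfolding finite_measure_subalgebra_def finite_measure_subalgebra_axioms_def by blast

abbreviation G :: "nat \<Rightarrow> 'a measure" where
  "G i \<equiv> F (grid i)"

lemma subalgebra_G: "i < n \<Longrightarrow> subalgebra M (G i)"
  using subalgebra_F grid_nonneg by auto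

lemma sigma_finite_subalgebra_G: "i < n \<Longrightarrow> sigma_finite_subalgebra M (G i)"
  using sigma_finite_subalgebra_F grid_nonneg by auto

lemma subalgebra_G_G: "i \<le> j \<Longrightarrow> j < n \<Longrightarrow> subalgebra (G j) (G i)"
  using space_F grid_nonneg[of i] grid_nonneg[of j] sets_F_mono grid_mono[of i j]
  unfolding subalgebra_def by auto

lemma sets_F_seg: "i < n \<Longrightarrow> t \<in> seg i \<Longrightarrow> sets (F t) = sets (G i)"
  using F_piecewise_const seg_nonneg unfolding seg_def grid_def by blast

lemma nn_cond_exp_F_seg: "i < n \<Longrightarrow> t \<in> seg i \<Longrightarrow> nn_cond_exp M (F t) = nn_cond_exp M (G i)"
  by (intro nn_cond_exp_cong_sets subalgebra_F subalgebra_G sets_F_seg seg_nonneg)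

lemma real_cond_exp_F_seg: "i < n \<Longrightarrow> t \<in> seg i \<Longrightarrow> real_cond_exp M (F t) = real_cond_exp M (G i)"
  by (intro real_cond_exp_cong_sets subalgebra_F subalgebra_G sets_F_seg seg_nonneg)

lemma tau_values:
  assumes "x \<in> space M"
  shows "\<exists>i\<le>n. \<tau> x = tt i"
proof -
  obtain A where A: "\<forall>i\<le>n. \<forall>x\<in>A i \<inter> space M. \<tau> x = tt i"
      "\<forall>x\<in>space M - (\<Union>i\<in>{0..n}. A i). \<tau> x = 0"
    using stopping_time unfolding FT_stopping_time_def by blast
  show ?thesis
  proof (cases "x \<in> (\<Union>i\<in>{0..n}. A i)")
    case True
    then show ?thesis using A(1) assms by auto
  next
    case False
    then show ?thesis using A(2) assms tt_0 by (intro exI[of _ 0]) auto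
  qed
qed

lemma tau_nonneg: "x \<in> space M \<Longrightarrow> 0 \<le> \<tau> x"
  using tau_values tt_nonneg by (metis (no_types))

lemma less_tau_iff_seg:
  assumes "x \<in> space M" "i < n" "s \<in> seg i"
  shows "ereal s < \<tau> x \<longleftrightarrow> tt i < \<tau> x"
proof -
  obtain j where j: "j \<le> n" "\<tau> x = tt j"
    using tau_values[OF assms(1)] by blast
  show ?thesis
  proof (cases "j \<le> i")
    case True
    then show ?thesis using tt_mono[of j i] j assms unfolding seg_def by auto
  next
    case False
    then show ?thesis using tt_mono[of "Suc i" j] tt_strict_mono[of i j] j assms unfolding seg_def by auto
  qed
qed

lemma pred_tt_less_tau: "i < n \<Longrightarrow> Measurable.pred (G i) (\<lambda>x. tt i < \<tau> x)"
proof -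
  assume i: "i < n"
  have "{x \<in> space M. \<tau> x \<le> ereal (grid i)} \<in> sets (G i)"
    using stopping_time grid_nonneg[OF i] unfolding FT_stopping_time_def by blast
  then have "space (G i) - {x \<in> space M. \<tau> x \<le> ereal (grid i)} \<in> sets (G i)"
    by auto
  moreover have "space (G i) - {x \<in> space M. \<tau> x \<le> ereal (grid i)} = {x \<in> space (G i). tt i < \<tau> x}"
    using space_F[OF grid_nonneg[OF i]] tt_eq_grid[OF i] by auto
  ultimately show ?thesis
    unfolding pred_def by simp
qed

lemma borel_measurable_tau: "\<tau> \<in> borel_measurable M"
proof (rule borel_measurableI_le)
  fix y :: ereal
  show "{x \<in> space M. \<tau> x \<le> y} \<in> sets M"
  proof (cases y)
    case (real r)
    show ?thesis
    proof (cases "0 \<le> r")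
      case True
      then have "{x \<in> space M. \<tau> x \<le> y} \<in> sets (F r)"
        using stopping_time real unfolding FT_stopping_time_def by blast
      then show ?thesis
        using subalgebra_F[OF True] unfolding subalgebra_def by auto
    next
      case False
      have "\<not> \<tau> x \<le> y" if "x \<in> space M" for x
        using tau_nonneg[OF that] False real by (cases "\<tau> x") auto
      then have "{x \<in> space M. \<tau> x \<le> y} = {}"
        by blast
      then show ?thesis by (simp only: sets.empty_sets)
    qed
  next
    case MInf
    then have "{x \<in> space M. \<tau> x \<le> y} = {}"
      using tau_nonneg by (auto simp: not_le)
    then show ?thesis by (simp only: sets.empty_sets)
  qed simp
qed

section \<open>Construction of the solution\<close>

definition \<kappa> :: real where
  "\<kappa> = 1 / (\<gamma> * \<theta>)"

definition gain :: "nat \<Rightarrow> real \<Rightarrow> 'a \<Rightarrow> real" where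
  "gain i s x = \<kappa> * (exp (- \<gamma> * s) - discount \<gamma> (tt (Suc i))) * (if tt i < \<tau> x then 1 else 0)"

definition cont_bound :: "nat \<Rightarrow> real" where
  "cont_bound i = (\<kappa> * discount \<gamma> (tt (Suc i))) powr \<theta>"

text \<open>The continuation value \<open>c\<^sub>i = E[W(t\<^sub>i\<^sub>+\<^sub>1) | F(t\<^sub>i)]\<close>, computed backwards from \<open>c\<^sub>n\<^sub>-\<^sub>1 = 0\<close>.
  It is clipped to the range \<open>[0, cont_bound i]\<close> that the conditional expectation has almost
  surely, so that the bounds hold everywhere.\<close>
definition cont :: "nat \<Rightarrow> 'a \<Rightarrow> real" where
  "cont = backward_rec n
     (\<lambda>i c x. min (cont_bound i) (max 0 (real_cond_exp M (G i)
        (\<lambda>y. (c y powr (1 / \<theta>) + gain (Suc i) (grid (Suc i)) y) powr \<theta>) x)))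
     (\<lambda>x. 0)"

definition W_root :: "nat \<Rightarrow> real \<Rightarrow> 'a \<Rightarrow> real" where
  "W_root i s x = cont i x powr (1 / \<theta>) + gain i s x"

definition W_seg :: "nat \<Rightarrow> real \<Rightarrow> 'a \<Rightarrow> real" where
  "W_seg i s x = W_root i s x powr \<theta>"

definition W :: "real \<Rightarrow> 'a \<Rightarrow> real" where
  "W s x = (\<Sum>i<n. indicator (seg i) s * W_seg i s x)"

lemma cont_last: "\<not> Suc i < n \<Longrightarrow> cont i x = 0"
  unfolding cont_def by (simp add: backward_rec.simps)

lemma cont_rec:
  "Suc i < n \<Longrightarrow>
    cont i x = min (cont_bound i) (max 0 (real_cond_exp M (G i) (W_seg (Suc i) (grid (Suc i))) x))"
  unfolding cont_def W_seg_def W_root_def by (simp add: backward_rec.simps[of n _ _ i])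

lemma kappa_pos: "0 < \<kappa>"
  using gamma_pos theta_gt_1 unfolding \<kappa>_def by simp

lemma gain_nonneg: "ereal s \<le> tt (Suc i) \<Longrightarrow> 0 \<le> gain i s x"
  using discount_le_exp[OF gamma_pos] kappa_pos unfolding gain_def by simp

lemma gain_le: "ereal s \<le> tt (Suc i) \<Longrightarrow> gain i s x \<le> \<kappa> * (exp (- \<gamma> * s) - discount \<gamma> (tt (Suc i)))"
  using discount_le_exp[OF gamma_pos] kappa_pos unfolding gain_def by simp

lemma cont_bound_nonneg: "0 \<le> cont_bound i"
  unfolding cont_bound_def by simp

lemma cont_nonneg: "0 \<le> cont i x"
  using cont_bound_nonneg by (cases "Suc i < n") (simp_all add: cont_rec cont_last)

lemma cont_le_bound: "cont i x \<le> cont_bound i"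
  by (cases "Suc i < n") (simp_all add: cont_rec cont_last cont_bound_def)

lemma cont_root_le: "cont i x powr (1 / \<theta>) \<le> \<kappa> * discount \<gamma> (tt (Suc i))"
proof -
  have "cont i x powr (1 / \<theta>) \<le> cont_bound i powr (1 / \<theta>)"
    using cont_nonneg cont_le_bound theta_gt_1 by (intro powr_mono2) auto
  also have "\<dots> = \<kappa> * discount \<gamma> (tt (Suc i))"
    using theta_gt_1 kappa_pos discount_nonneg unfolding cont_bound_def by (simp add: powr_powr)
  finally show ?thesis .
qed

lemma cont_root_powr: "(cont i x powr (1 / \<theta>)) powr \<theta> = cont i x"
  using cont_nonneg theta_gt_1 by (simp add: powr_powr)

lemma W_root_nonneg: "ereal s \<le> tt (Suc i) \<Longrightarrow> 0 \<le> W_root i s x"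
  unfolding W_root_def using gain_nonneg by simp

lemma W_root_le: "ereal s \<le> tt (Suc i) \<Longrightarrow> W_root i s x \<le> \<kappa> * exp (- \<gamma> * s)"
  unfolding W_root_def using gain_le[of s i x] cont_root_le[of i x] by (simp add: algebra_simps)

lemma W_seg_le: "ereal s \<le> tt (Suc i) \<Longrightarrow> W_seg i s x \<le> (\<kappa> * exp (- \<gamma> * s)) powr \<theta>"
  unfolding W_seg_def using W_root_nonneg W_root_le theta_gt_1 by (intro powr_mono2) auto

lemma W_seg_nonneg: "0 \<le> W_seg i s x"
  unfolding W_seg_def by simp

lemma W_seg_grid_le: "Suc i < n \<Longrightarrow> W_seg (Suc i) (grid (Suc i)) x \<le> cont_bound i"
  using W_seg_le[of "grid (Suc i)" "Suc i" x] grid_in_seg[of "Suc i"] tt_eq_grid[of "Suc i"]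
  unfolding seg_def cont_bound_def discount_def by simp

lemma cont_le_W_seg: "ereal s \<le> tt (Suc i) \<Longrightarrow> cont i x \<le> W_seg i s x"
proof -
  assume "ereal s \<le> tt (Suc i)"
  then have "(cont i x powr (1 / \<theta>)) powr \<theta> \<le> W_seg i s x"
    unfolding W_seg_def W_root_def using gain_nonneg theta_gt_1 by (intro powr_mono2) auto
  then show ?thesis
    by (simp only: cont_root_powr)
qed

lemma W_eq_W_seg: "i < n \<Longrightarrow> s \<in> seg i \<Longrightarrow> W s x = W_seg i s x"
  unfolding W_def using seg_unique by (subst sum.remove[of _ i]) (auto intro!: sum.neutral)

lemma W_nonneg: "0 \<le> W s x"
  unfolding W_def W_seg_def by (intro sum_nonneg) simp

lemma measurable_cont [measurable]: "cont i \<in> borel_measurable (G i)"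
proof (cases "Suc i < n")
  case True
  then have "cont i = (\<lambda>x. min (cont_bound i)
      (max 0 (real_cond_exp M (G i) (W_seg (Suc i) (grid (Suc i))) x)))"
    by (simp add: fun_eq_iff cont_rec)
  then show ?thesis by simp
next
  case False
  then have "cont i = (\<lambda>x. 0)"
    by (simp add: fun_eq_iff cont_last)
  then show ?thesis by simp
qed

lemma measurable_gain:
  "i < n \<Longrightarrow> (\<lambda>p. gain i (fst p) (snd p)) \<in> borel_measurable (borel \<Otimes>\<^sub>M G i)"
  using pred_tt_less_tau[of i] unfolding gain_def by measurable

lemma measurable_W_seg:
  "i < n \<Longrightarrow> (\<lambda>p. W_seg i (fst p) (snd p)) \<in> borel_measurable (borel \<Otimes>\<^sub>M G i)"
  using pred_tt_less_tau[of i] unfolding W_seg_def W_root_def gain_def by measurable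

lemma measurable_W_seg_M:
  "i < n \<Longrightarrow> (\<lambda>p. W_seg i (fst p) (snd p)) \<in> borel_measurable (borel \<Otimes>\<^sub>M M)"
  using measurable_pair_subalgebra[OF subalgebra_G measurable_W_seg] .

lemma sets_seg [measurable]: "seg i \<in> sets borel"
  unfolding seg_def by measurable

lemma measurable_W: "(\<lambda>p. W (fst p) (snd p)) \<in> borel_measurable (borel \<Otimes>\<^sub>M M)"
  unfolding W_def
proof (rule borel_measurable_sum)
  fix i assume "i \<in> {..<n}"
  then have [measurable]: "(\<lambda>p. W_seg i (fst p) (snd p)) \<in> borel_measurable (borel \<Otimes>\<^sub>M M)"
    using measurable_W_seg_M by simp
  show
    "(\<lambda>p. indicator (seg i) (fst p) * W_seg i (fst p) (snd p)) \<in> borel_measurable (borel \<Otimes>\<^sub>M M)"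
    by measurable
qed

section \<open>The recursive utility equation\<close>

definition U :: "real \<Rightarrow> 'a \<Rightarrow> real" where
  "U s x = exp (- \<gamma> * s) * (if ereal s < \<tau> x then 1 else 0)"

definition future_utility :: "real \<Rightarrow> 'a \<Rightarrow> ennreal" where
  "future_utility t x = (\<integral>\<^sup>+ s. ennreal (indicator {t..} s * h_EZ \<theta> (U s x) (W s x)) \<partial>lborel)"

lemma measurable_h_EZ_U_W:
  "(\<lambda>p. h_EZ \<theta> (U (fst p) (snd p)) (W (fst p) (snd p))) \<in> borel_measurable (borel \<Otimes>\<^sub>M M)"
  using measurable_W borel_measurable_tau unfolding h_EZ_def U_def by measurable

lemma measurable_future_utility [measurable]: "future_utility t \<in> borel_measurable M"
  unfolding future_utility_def using measurable_h_EZ_U_W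
  by (intro measurable_nn_integral_lborel) measurable

lemma h_EZ_U_W_seg:
  assumes "x \<in> space M" "i < n" "s \<in> seg i"
  shows "h_EZ \<theta> (U s x) (W s x) = exp (- \<gamma> * s) * (if tt i < \<tau> x then 1 else 0) * W_root i s x powr (\<theta> - 1)"
proof -
  have "W s x powr ((\<theta> - 1) / \<theta>) = W_root i s x powr (\<theta> - 1)"
    using theta_gt_1 unfolding W_eq_W_seg[OF assms(2,3)] W_seg_def by (simp add: powr_powr)
  then show ?thesis
    unfolding h_EZ_def U_def using less_tau_iff_seg[OF assms] by simp
qed

lemma nn_integral_rest_of_seg:
  assumes x: "x \<in> space M" and i: "i < n" "t \<in> seg i"
  shows "(\<integral>\<^sup>+ s. ennreal (indicator {s. t \<le> s \<and> ereal s < tt (Suc i)} s * h_EZ \<theta> (U s x) (W s x)) \<partial>lborel)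
         = ennreal (W_seg i t x - cont i x)"
proof (cases "tt i < \<tau> x")
  case True
  define C where "C = cont i x powr (1 / \<theta>)"
  have "(\<integral>\<^sup>+ s. ennreal (indicator {s. t \<le> s \<and> ereal s < tt (Suc i)} s * h_EZ \<theta> (U s x) (W s x)) \<partial>lborel)
      = (\<integral>\<^sup>+ s. ennreal (indicator {s. t \<le> s \<and> ereal s < tt (Suc i)} s *
           (exp (- \<gamma> * s) * (C + \<kappa> * (exp (- \<gamma> * s) - discount \<gamma> (tt (Suc i)))) powr (\<theta> - 1))) \<partial>lborel)"
  proof (rule nn_integral_cong)
    fix s :: real
    have "s \<in> seg i" if "t \<le> s" "ereal s < tt (Suc i)"
      using in_seg_after[OF i(2) that] .
    then show "ennreal (indicator {s. t \<le> s \<and> ereal s < tt (Suc i)} s * h_EZ \<theta> (U s x) (W s x)) =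
          ennreal (indicator {s. t \<le> s \<and> ereal s < tt (Suc i)} s *
           (exp (- \<gamma> * s) * (C + \<kappa> * (exp (- \<gamma> * s) - discount \<gamma> (tt (Suc i)))) powr (\<theta> - 1)))"
      using h_EZ_U_W_seg[OF x i(1)] True unfolding indicator_def W_root_def gain_def C_def by auto
  qed
  also have "\<dots> = ennreal ((C + \<kappa> * (exp (- \<gamma> * t) - discount \<gamma> (tt (Suc i)))) powr \<theta> - C powr \<theta>)"
    using i(2) unfolding seg_def
    by (intro nn_integral_exp_powr_segment gamma_pos theta_gt_1 \<kappa>_def) (simp_all add: C_def)
  also have "\<dots> = ennreal (W_seg i t x - cont i x)"
    using True unfolding W_seg_def W_root_def gain_def C_def cont_root_powr by simp
  finally show ?thesis .
next
  case False
  have "s \<in> seg i" if "t \<le> s" "ereal s < tt (Suc i)" for s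
    using in_seg_after[OF i(2) that] .
  then have "ennreal (indicator {s. t \<le> s \<and> ereal s < tt (Suc i)} s * h_EZ \<theta> (U s x) (W s x)) = 0" for s
    using h_EZ_U_W_seg[OF x i(1)] False by (auto simp: indicator_def)
  then have "(\<integral>\<^sup>+ s. ennreal (indicator {s. t \<le> s \<and> ereal s < tt (Suc i)} s * h_EZ \<theta> (U s x) (W s x)) \<partial>lborel) = 0"
    by (simp only: nn_integral_const mult_zero_left)
  moreover have "W_seg i t x = cont i x"
    using False unfolding W_seg_def W_root_def gain_def by (simp add: cont_root_powr)
  ultimately show ?thesis
    by simp
qed

lemma future_utility_split:
  assumes x: "x \<in> space M" and i: "i < n" "t \<in> seg i"
  shows "future_utility t x =
    ennreal (W_seg i t x - cont i x) + (if Suc i < n then future_utility (grid (Suc i)) x else 0)"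
proof -
  define H where "H s = ennreal (h_EZ \<theta> (U s x) (W s x))" for s
  have [measurable]: "H \<in> borel_measurable borel"
    unfolding H_def using measurable_compose[OF measurable_Pair2'[OF x] measurable_h_EZ_U_W] by simp
  have rest: "(\<integral>\<^sup>+ s. indicator {s. t \<le> s \<and> ereal s < tt (Suc i)} s * H s \<partial>lborel)
      = ennreal (W_seg i t x - cont i x)"
    using nn_integral_rest_of_seg[OF assms] h_EZ_def U_def W_nonneg
    unfolding H_def by (simp add: indicator_mult_ennreal mult.commute)
  have H_future: "future_utility t' x = (\<integral>\<^sup>+ s. indicator {t'..} s * H s \<partial>lborel)" for t'
    unfolding future_utility_def H_def using h_EZ_def U_def W_nonneg
    by (intro nn_integral_cong) (simp add: indicator_mult_ennreal mult.commute)
  show ?thesis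
  proof (cases "Suc i < n")
    case True
    have "t < grid (Suc i)"
      using i(2) tt_eq_grid[OF True] unfolding seg_def by simp
    then have "indicator {t..} s * H s =
        indicator {s. t \<le> s \<and> ereal s < tt (Suc i)} s * H s + indicator {grid (Suc i)..} s * H s" for s
      using tt_eq_grid[OF True] by (auto simp: indicator_def)
    then have "future_utility t x = (\<integral>\<^sup>+ s. indicator {s. t \<le> s \<and> ereal s < tt (Suc i)} s * H s \<partial>lborel)
        + future_utility (grid (Suc i)) x"
      unfolding H_future by (simp add: nn_integral_add)
    then show ?thesis
      using True rest by simp
  next
    case False
    then have "Suc i = n"
      using i(1) by simp
    then have "tt (Suc i) = \<infinity>"
      using tt_n by simp
    then have "indicator {t..} s * H s = indicator {s. t \<le> s \<and> ereal s < tt (Suc i)} s * H s" for s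
      by (auto simp: indicator_def)
    then show ?thesis
      using False rest unfolding H_future by simp
  qed
qed

lemma measurable_W_seg_slice: "i < n \<Longrightarrow> W_seg i t \<in> borel_measurable (G i)"
  using measurable_Pair2[OF measurable_W_seg, of i t] by simp

lemma measurable_W_seg_slice_M: "i < n \<Longrightarrow> W_seg i t \<in> borel_measurable M"
  using measurable_from_subalg[OF subalgebra_G measurable_W_seg_slice] .

lemma integrable_W_seg_grid: "Suc i < n \<Longrightarrow> integrable M (W_seg (Suc i) (grid (Suc i)))"
  using W_seg_grid_le[of i] measurable_W_seg_slice_M[of "Suc i"] W_seg_nonneg
  by (intro integrable_const_bound[of _ "cont_bound i"]) auto

lemma cont_eq_real_cond_exp:
  assumes "Suc i < n"
  shows "AE x in M. cont i x = real_cond_exp M (G i) (W_seg (Suc i) (grid (Suc i))) x"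
proof -
  interpret sigma_finite_subalgebra M "G i"
    using sigma_finite_subalgebra_G assms by simp
  have "AE x in M. 0 \<le> real_cond_exp M (G i) (W_seg (Suc i) (grid (Suc i))) x"
    using measurable_W_seg_slice_M[OF assms] by (intro real_cond_exp_pos) (auto simp: W_seg_nonneg)
  moreover have "AE x in M. real_cond_exp M (G i) (W_seg (Suc i) (grid (Suc i))) x \<le> cont_bound i"
    using integrable_W_seg_grid[OF assms] W_seg_grid_le[OF assms] by (intro real_cond_exp_le_c) auto
  ultimately show ?thesis
    unfolding cont_rec[OF assms] by eventually_elim simp
qed

lemma cont_eq_nn_cond_exp:
  assumes "Suc i < n"
  shows "AE x in M. ennreal (cont i x) = nn_cond_exp M (G i) (\<lambda>x. ennreal (W_seg (Suc i) (grid (Suc i)) x)) x"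
proof -
  interpret sigma_finite_subalgebra M "G i"
    using sigma_finite_subalgebra_G assms by simp
  have "AE x in M. nn_cond_exp M (G i) (\<lambda>x. ennreal (W_seg (Suc i) (grid (Suc i)) x)) x
      = ennreal (real_cond_exp M (G i) (W_seg (Suc i) (grid (Suc i))) x)"
    using measurable_W_seg_slice_M[OF assms] W_seg_grid_le[OF assms]
    by (intro nn_cond_exp_eq_real_cond_exp[of _ "cont_bound i"]) (auto simp: W_seg_nonneg)
  with cont_eq_real_cond_exp[OF assms] show ?thesis
    by eventually_elim simp
qed

lemma cond_future_utility_next:
  assumes later: "Suc i < n"
    and IH: "AE x in M. ennreal (W (grid (Suc i)) x) =
      nn_cond_exp M (G (Suc i)) (future_utility (grid (Suc i))) x"
  shows "AE x in M. nn_cond_exp M (G i) (future_utility (grid (Suc i))) x = ennreal (cont i x)"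
proof -
  interpret sigma_finite_subalgebra M "G i"
    using sigma_finite_subalgebra_G later by simp
  let ?R = "grid (Suc i)"
  have "AE x in M. nn_cond_exp M (G i) (future_utility ?R) x
      = nn_cond_exp M (G i) (nn_cond_exp M (G (Suc i)) (future_utility ?R)) x"
    using subalgebra_G[OF later] subalgebra_G_G[OF _ later] by (intro nn_cond_exp_nested_subalg) auto
  moreover have "AE x in M. nn_cond_exp M (G i) (nn_cond_exp M (G (Suc i)) (future_utility ?R)) x
      = nn_cond_exp M (G i) (\<lambda>x. ennreal (W_seg (Suc i) ?R x)) x"
  proof (rule nn_cond_exp_cong)
    show "AE x in M. nn_cond_exp M (G (Suc i)) (future_utility ?R) x = ennreal (W_seg (Suc i) ?R x)"
      using IH W_eq_W_seg[OF later grid_in_seg[OF later]] by auto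
    show "(\<lambda>x. ennreal (W_seg (Suc i) ?R x)) \<in> borel_measurable M"
      using measurable_W_seg_slice_M[OF later] by simp
  qed simp
  moreover have "AE x in M. ennreal (cont i x) = nn_cond_exp M (G i) (\<lambda>x. ennreal (W_seg (Suc i) ?R x)) x"
    by (rule cont_eq_nn_cond_exp[OF later])
  ultimately show ?thesis
    by eventually_elim simp
qed

lemma W_eq_cond_future_utility_seg:
  "i < n \<Longrightarrow> t \<in> seg i \<Longrightarrow> AE x in M. ennreal (W t x) = nn_cond_exp M (G i) (future_utility t) x"
proof (induction "n - i" arbitrary: i t rule: less_induct)
  case less
  note i = less.prems
  interpret sigma_finite_subalgebra M "G i"
    using sigma_finite_subalgebra_G i by simp
  have W_t: "W t x = W_seg i t x" for x
    using W_eq_W_seg[OF i] .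
  have [measurable]: "W_seg i t \<in> borel_measurable (G i)" "W_seg i t \<in> borel_measurable M"
    using measurable_W_seg_slice measurable_W_seg_slice_M i by simp_all
  show ?case
  proof (cases "Suc i < n")
    case False
    have "AE x in M. nn_cond_exp M (G i) (future_utility t) x = nn_cond_exp M (G i) (\<lambda>x. ennreal (W_seg i t x)) x"
      using future_utility_split[OF _ i] False cont_last
      by (intro nn_cond_exp_cong) auto
    moreover have "AE x in M. ennreal (W_seg i t x) = nn_cond_exp M (G i) (\<lambda>x. ennreal (W_seg i t x)) x"
      by (intro nn_cond_exp_F_meas) simp
    ultimately show ?thesis
      unfolding W_t by eventually_elim simp
  next
    case True
    let ?R = "grid (Suc i)"
    define A where "A x = ennreal (W_seg i t x - cont i x)" for x
    have A_measurable [measurable]: "A \<in> borel_measurable (G i)"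
      unfolding A_def by measurable
    have [measurable]: "A \<in> borel_measurable M"
      using measurable_from_subalg[OF subalg A_measurable] .
    have A_cont: "A x + ennreal (cont i x) = ennreal (W_seg i t x)" for x
    proof -
      have "cont i x \<le> W_seg i t x"
        using cont_le_W_seg i(2) unfolding seg_def by (simp add: less_imp_le)
      then show ?thesis
        unfolding A_def using cont_nonneg[of i x] by (subst ennreal_plus[symmetric]) auto
    qed
    have "x \<in> space M \<Longrightarrow> future_utility t x = A x + future_utility ?R x" for x
      using future_utility_split[OF _ i] True unfolding A_def by simp
    then have "AE x in M. nn_cond_exp M (G i) (future_utility t) x
        = nn_cond_exp M (G i) (\<lambda>x. A x + future_utility ?R x) x"
      by (intro nn_cond_exp_cong) auto
    moreover have "AE x in M. nn_cond_exp M (G i) A x + nn_cond_exp M (G i) (future_utility ?R) x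
        = nn_cond_exp M (G i) (\<lambda>x. A x + future_utility ?R x) x"
      by (intro nn_cond_exp_sum) auto
    moreover have "AE x in M. A x = nn_cond_exp M (G i) A x"
      by (intro nn_cond_exp_F_meas) simp
    moreover have "AE x in M. nn_cond_exp M (G i) (future_utility ?R) x = ennreal (cont i x)"
      by (rule cond_future_utility_next[OF True less.hyps]) (use i True grid_in_seg in auto)
    ultimately show ?thesis
      unfolding W_t
    proof eventually_elim
      case (elim x)
      have "ennreal (W_seg i t x) = nn_cond_exp M (G i) A x + nn_cond_exp M (G i) (future_utility ?R) x"
        using A_cont[of x] elim(3,4) by simp
      also have "\<dots> = nn_cond_exp M (G i) (future_utility t) x"
        using elim(1,2) by simp
      finally show ?case .
    qed
  qed
qed

lemma W_eq_cond_future_utility: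
  assumes "0 \<le> t"
  shows "AE x in M. ennreal (W t x) = nn_cond_exp M (F t) (future_utility t) x"
proof -
  obtain i where "i < n" "t \<in> seg i"
    using seg_exists[OF assms] .
  then show ?thesis
    using W_eq_cond_future_utility_seg nn_cond_exp_F_seg by simp
qed

section \<open>Path regularity and integrability\<close>

lemma tendsto_W_seg:
  assumes "\<forall>\<^sub>F s in at t within S. ereal s \<le> tt (Suc i)"
  shows "((\<lambda>s. W_seg i s x) \<longlongrightarrow> W_seg i t x) (at t within S)"
proof -
  have "((\<lambda>s. W_root i s x) \<longlongrightarrow> W_root i t x) (at t within S)"
    unfolding W_root_def gain_def by (intro tendsto_intros)
  moreover have "\<forall>\<^sub>F s in at t within S. 0 \<le> W_root i s x"
    using assms by eventually_elim (rule W_root_nonneg)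
  ultimately show ?thesis
    unfolding W_seg_def using theta_gt_1 by (intro tendsto_powr2 tendsto_const) auto
qed

lemma W_continuous_at_right:
  assumes "0 \<le> t"
  shows "continuous (at_right t) (\<lambda>s. W s x)"
proof -
  obtain i where i: "i < n" "t \<in> seg i"
    using seg_exists[OF assms] .
  have near: "\<forall>\<^sub>F s in at_right t. t < s \<and> ereal s < tt (Suc i)"
    using i(2) unfolding seg_def by (intro eventually_at_right_less_ereal) simp
  have "((\<lambda>s. W_seg i s x) \<longlongrightarrow> W_seg i t x) (at_right t)"
    using near by (intro tendsto_W_seg) (auto elim: eventually_mono)
  moreover have "\<forall>\<^sub>F s in at_right t. W_seg i s x = W s x"
    using near
  proof eventually_elim
    case (elim s)
    then have "s \<in> seg i"
      using in_seg_after[OF i(2)] by simp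
    then show ?case
      using W_eq_W_seg[OF i(1)] by simp
  qed
  ultimately have "((\<lambda>s. W s x) \<longlongrightarrow> W_seg i t x) (at_right t)"
    by (rule tendsto_cong[THEN iffD1, rotated])
  then show ?thesis
    unfolding continuous_within using W_eq_W_seg[OF i] by simp
qed

lemma W_has_left_limit:
  assumes "0 < t"
  shows "\<exists>l. ((\<lambda>s. W s x) \<longlongrightarrow> l) (at_left t)"
proof -
  obtain j where j: "j < n" "tt j < ereal t" "ereal t \<le> tt (Suc j)"
    using seg_left_exists[OF assms] .
  have near: "\<forall>\<^sub>F s in at_left t. grid j < s \<and> s < t"
    using j tt_eq_grid[of j] eventually_at_left_real[of "grid j" t] by (auto elim: eventually_mono)
  have "\<forall>\<^sub>F s in at_left t. ereal s \<le> tt (Suc j)"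
    using near
  proof eventually_elim
    case (elim s)
    then have "ereal s \<le> ereal t" by simp
    then show ?case using j(3) by (rule order_trans)
  qed
  then have "((\<lambda>s. W_seg j s x) \<longlongrightarrow> W_seg j t x) (at_left t)"
    by (rule tendsto_W_seg)
  moreover have "\<forall>\<^sub>F s in at_left t. W_seg j s x = W s x"
    using near
  proof eventually_elim
    case (elim s)
    then have "s \<in> seg j"
      using j tt_eq_grid[of j] unfolding seg_def by (auto intro: less_le_trans[of _ "ereal t"])
    then show ?case
      using W_eq_W_seg[OF j(1)] by simp
  qed
  ultimately have "((\<lambda>s. W s x) \<longlongrightarrow> W_seg j t x) (at_left t)"
    by (rule tendsto_cong[THEN iffD1, rotated])
  then show ?thesis ..
qed

lemma cadlag_W: "cadlag_on M W"
  unfolding cadlag_on_def using W_continuous_at_right W_has_left_limit by blast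

lemma prog_measurable_W: "prog_measurable M F W"
  unfolding prog_measurable_def
proof (intro allI impI)
  fix t :: real assume t: "0 \<le> t"
  let ?N = "restrict_space borel {0..t} \<Otimes>\<^sub>M F t"
  have "(\<lambda>s. s) \<in> measurable (restrict_space borel {0..t}) borel"
    by (rule measurable_restrict_space1) simp
  from measurable_compose[OF measurable_fst this]
  have to_borel: "(\<lambda>p. p) \<in> measurable ?N (borel \<Otimes>\<^sub>M F t)"
    unfolding measurable_pair_iff by (simp add: o_def)
  have "(\<lambda>p. indicator (seg i) (fst p) * W_seg i (fst p) (snd p)) \<in> borel_measurable ?N"
    if "i < n" for i
  proof (cases "tt i \<le> ereal t")
    case True
    then have "grid i \<le> t"
      using tt_eq_grid[OF that] by simp
    then have "subalgebra (F t) (G i)"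
      using space_F[OF t] space_F[OF grid_nonneg[OF that]] sets_F_mono[OF grid_nonneg[OF that]]
      unfolding subalgebra_def by simp
    from measurable_pair_subalgebra[OF this measurable_W_seg[OF that]]
    have "(\<lambda>p. indicator (seg i) (fst p) * W_seg i (fst p) (snd p)) \<in> borel_measurable (borel \<Otimes>\<^sub>M F t)"
      by measurable
    from measurable_compose[OF to_borel this] show ?thesis
      by simp
  next
    case False
    have "indicator (seg i) (fst p) * W_seg i (fst p) (snd p) = 0" if "p \<in> space ?N" for p
    proof -
      have "ereal (fst p) \<le> ereal t"
        using that by (auto simp: space_pair_measure space_restrict_space)
      then have "\<not> tt i \<le> ereal (fst p)"
        using False order_trans by blast
      then show ?thesis
        unfolding seg_def by simp
    qed
    then show ?thesis
      by (subst measurable_cong[where g = "\<lambda>_. 0"]) simp_all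
  qed
  then have "(\<lambda>p. W (fst p) (snd p)) \<in> borel_measurable ?N"
    unfolding W_def by (intro borel_measurable_sum) auto
  then show "(\<lambda>(s, x). W s x) \<in> borel_measurable ?N"
    by (simp add: case_prod_beta)
qed

lemma nn_integral_future_utility_finite: "(\<integral>\<^sup>+ x. future_utility 0 x \<partial>M) < \<infinity>"
proof -
  interpret sigma_finite_subalgebra M "F 0"
    using sigma_finite_subalgebra_F by simp
  have seg0: "0 \<in> seg 0"
    using grid_in_seg[OF n_pos] tt_0 unfolding grid_def by simp
  have "(\<integral>\<^sup>+ x. future_utility 0 x \<partial>M) = (\<integral>\<^sup>+ x. (\<lambda>_. 1) x * nn_cond_exp M (F 0) (future_utility 0) x \<partial>M)"
    by (subst nn_cond_exp_intg) auto
  also have "\<dots> = (\<integral>\<^sup>+ x. ennreal (W 0 x) \<partial>M)"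
    using W_eq_cond_future_utility[of 0] by (intro nn_integral_cong_AE) auto
  also have "\<dots> \<le> (\<integral>\<^sup>+ x. ennreal (\<kappa> powr \<theta>) \<partial>M)"
  proof (intro nn_integral_mono ennreal_leI)
    fix x
    have "W 0 x = W_seg 0 0 x"
      using W_eq_W_seg[OF n_pos seg0] .
    also have "\<dots> \<le> (\<kappa> * exp (- \<gamma> * 0)) powr \<theta>"
      using seg0 unfolding seg_def by (intro W_seg_le) (simp add: less_imp_le)
    finally show "W 0 x \<le> \<kappa> powr \<theta>"
      by simp
  qed
  also have "\<dots> < \<infinity>"
    using emeasure_space_1 by (simp add: ennreal_mult_less_top)
  finally show ?thesis .
qed

section \<open>Properness and the lower bound\<close>

lemma W_pos:
  assumes "i < n" "t \<in> seg i" "tt i < \<tau> x"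
  shows "0 < W t x"
proof -
  have "0 < gain i t x"
    using assms discount_less_exp[OF gamma_pos] kappa_pos unfolding seg_def gain_def by simp
  then have "0 < W_root i t x"
    unfolding W_root_def by (simp add: add_nonneg_pos)
  then show ?thesis
    using W_eq_W_seg[OF assms(1,2)] unfolding W_seg_def by simp
qed

lemma W_pos_if_cond_utility_pos:
  assumes "0 \<le> t"
  shows "AE x in M. 0 < nn_cond_exp M (F t) (\<lambda>y. \<integral>\<^sup>+ s. ennreal (indicator {t..} s * U s y powr \<theta>) \<partial>lborel) x
    \<longrightarrow> 0 < W t x"
proof -
  obtain i where i: "i < n" "t \<in> seg i"
    using seg_exists[OF assms] .
  interpret sigma_finite_subalgebra M "G i"
    using sigma_finite_subalgebra_G i by simp
  define Q where "Q y = (\<integral>\<^sup>+ s. ennreal (indicator {t..} s * U s y powr \<theta>) \<partial>lborel)" for y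
  define S where "S = {x \<in> space M. tt i < \<tau> x}"
  have S_G [measurable]: "S \<in> sets (G i)"
    using pred_tt_less_tau[OF i(1)] space_F[OF grid_nonneg[OF i(1)]] unfolding S_def pred_def by simp
  then have [measurable]: "S \<in> sets M"
    using subalg unfolding subalgebra_def by auto
  note [measurable] = borel_measurable_tau
  have [measurable]: "Q \<in> borel_measurable M"
    unfolding Q_def U_def by (intro measurable_nn_integral_lborel) measurable
  text \<open>Outside \<open>S\<close> the agent has stopped by \<open>t\<^sub>i \<le> t\<close>, so no utility accrues after \<open>t\<close>.\<close>
  have Q_S: "Q y = indicator S y * Q y" if "y \<in> space M" for y
  proof (cases "y \<in> S")
    case False
    have "\<not> ereal s < \<tau> y" if "t \<le> s" for s
    proof -
      have "\<tau> y \<le> tt i"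
        using False \<open>y \<in> space M\<close> unfolding S_def by auto
      also have "tt i \<le> ereal s"
        using i(2) that order_trans[of "tt i" "ereal t" "ereal s"] unfolding seg_def by simp
      finally show ?thesis by simp
    qed
    then have "ennreal (indicator {t..} s * U s y powr \<theta>) = 0" for s
      unfolding U_def by (cases "t \<le> s") auto
    then have "Q y = 0"
      unfolding Q_def by (simp only: nn_integral_const mult_zero_left)
    then show ?thesis by simp
  qed simp
  have "AE x in M. nn_cond_exp M (G i) Q x = nn_cond_exp M (G i) (\<lambda>y. indicator S y * Q y) x"
    using Q_S by (intro nn_cond_exp_cong) auto
  moreover have "AE x in M. indicator S x * nn_cond_exp M (G i) Q x = nn_cond_exp M (G i) (\<lambda>y. indicator S y * Q y) x"
    by (intro nn_cond_exp_prod) auto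
  ultimately have "AE x in M. 0 < nn_cond_exp M (G i) Q x \<longrightarrow> x \<in> S"
  proof eventually_elim
    case (elim x)
    then show ?case
      by (cases "x \<in> S") simp_all
  qed
  then show ?thesis
    unfolding nn_cond_exp_F_seg[OF i] Q_def[symmetric]
    by eventually_elim (use W_pos[OF i] in \<open>auto simp: S_def\<close>)
qed

definition V :: "real \<Rightarrow> 'a \<Rightarrow> real" where
  "V t y = exp (- \<gamma> * t) - (if \<tau> y = \<infinity> then 0 else exp (- \<gamma> * max t (real_of_ereal (\<tau> y))))"

lemma measurable_V [measurable]: "V t \<in> borel_measurable M"
proof -
  note [measurable] = borel_measurable_tau
  show ?thesis
    unfolding V_def by measurable
qed

lemma V_bounds:
  assumes "0 \<le> t"
  shows "0 \<le> V t y" "V t y \<le> 1"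
proof -
  show "0 \<le> V t y"
    using gamma_pos unfolding V_def by simp
  have "V t y \<le> exp (- \<gamma> * t)"
    unfolding V_def by simp
  also have "\<dots> \<le> 1"
    using gamma_pos assms by simp
  finally show "V t y \<le> 1" .
qed

lemma integrable_V: "0 \<le> t \<Longrightarrow> integrable M (V t)"
  using V_bounds by (intro integrable_const_bound[of _ 1]) auto

lemma V_split:
  assumes y: "y \<in> space M" and i: "i < n" "t \<in> seg i"
  shows "\<kappa> * V t y = gain i t y + (if Suc i < n then \<kappa> * V (grid (Suc i)) y else 0)"
proof -
  obtain j where j: "j \<le> n" "\<tau> y = tt j"
    using tau_values[OF y] by blast
  have gt: "grid i \<le> t" "ereal t < tt (Suc i)"
    using i tt_eq_grid[OF i(1)] unfolding seg_def by auto
  show ?thesis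
  proof (cases "j \<le> i")
    case True
    then have "\<tau> y = ereal (grid j)" "max t (grid j) = t" "\<not> tt i < \<tau> y"
      "Suc i < n \<Longrightarrow> max (grid (Suc i)) (grid j) = grid (Suc i)"
      using j tt_eq_grid[of j] grid_mono[of j i] grid_mono[of j "Suc i"] tt_mono[of j i] i gt by auto
    then show ?thesis
      unfolding V_def gain_def by simp
  next
    case False
    then have gain: "gain i t y = \<kappa> * (exp (- \<gamma> * t) - discount \<gamma> (tt (Suc i)))"
      using tt_strict_mono[of i j] j unfolding gain_def by simp
    show ?thesis
    proof (cases "Suc i < n")
      case True
      have "t < grid (Suc i)"
        using gt tt_eq_grid[OF True] by simp
      moreover have "\<tau> y = \<infinity> \<or> (\<tau> y = ereal (grid j) \<and> grid (Suc i) \<le> grid j)"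
        using j tt_n tt_eq_grid[of j] grid_mono[of "Suc i" j] False by (cases "j = n") auto
      ultimately show ?thesis
        using True gain tt_eq_grid[OF True] unfolding V_def discount_def by (auto simp: max_def algebra_simps)
    next
      case False
      then have last: "Suc i = n"
        using i(1) by simp
      then have "j = n"
        using j(1) \<open>\<not> j \<le> i\<close> by linarith
      then have "\<tau> y = \<infinity>"
        using j(2) tt_n by simp
      then show ?thesis
        using last gain tt_n unfolding V_def discount_def by (simp add: algebra_simps)
    qed
  qed
qed

lemma measurable_gain_slice: "i < n \<Longrightarrow> gain i s \<in> borel_measurable (G i)"
  using measurable_Pair2[OF measurable_gain, of i s] by simp

lemma integrable_gain:
  assumes "i < n" "ereal s \<le> tt (Suc i)"
  shows "integrable M (gain i s)"
  using measurable_from_subalg[OF subalgebra_G measurable_gain_slice] assms gain_nonneg gain_le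
  by (intro integrable_const_bound[of _ "\<kappa> * (exp (- \<gamma> * s) - discount \<gamma> (tt (Suc i)))"]) auto

lemma cond_V_seg:
  assumes i: "i < n" "t \<in> seg i"
  shows "AE x in M. \<kappa> * real_cond_exp M (G i) (V t) x =
    gain i t x + (if Suc i < n then \<kappa> * real_cond_exp M (G i) (V (grid (Suc i))) x else 0)"
proof -
  interpret sigma_finite_subalgebra M "G i"
    using sigma_finite_subalgebra_G i by simp
  have t: "0 \<le> t" "ereal t \<le> tt (Suc i)"
    using seg_nonneg[OF i] i(2) unfolding seg_def by auto
  have gain_int: "integrable M (gain i t)"
    using integrable_gain[OF i(1) t(2)] .
  have cmult: "AE x in M. real_cond_exp M (G i) (\<lambda>x. \<kappa> * V t x) x = \<kappa> * real_cond_exp M (G i) (V t) x"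
    using integrable_V[OF t(1)] by (rule real_cond_exp_cmult)
  have gain_cond: "AE x in M. real_cond_exp M (G i) (gain i t) x = gain i t x"
    using gain_int measurable_gain_slice[OF i(1)] by (rule real_cond_exp_F_meas)
  have "AE x in M. real_cond_exp M (G i) (\<lambda>x. \<kappa> * V t x) x =
      gain i t x + (if Suc i < n then \<kappa> * real_cond_exp M (G i) (V (grid (Suc i))) x else 0)"
  proof (cases "Suc i < n")
    case True
    have R_int: "integrable M (V (grid (Suc i)))"
      using integrable_V grid_nonneg True by simp
    have "AE x in M. real_cond_exp M (G i) (\<lambda>x. \<kappa> * V t x) x
        = real_cond_exp M (G i) (\<lambda>x. gain i t x + \<kappa> * V (grid (Suc i)) x) x"
      using V_split[OF _ i] True gain_int R_int by (intro real_cond_exp_cong) auto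
    moreover have "AE x in M. real_cond_exp M (G i) (\<lambda>x. gain i t x + \<kappa> * V (grid (Suc i)) x) x
        = real_cond_exp M (G i) (gain i t) x + real_cond_exp M (G i) (\<lambda>x. \<kappa> * V (grid (Suc i)) x) x"
      using gain_int R_int by (intro real_cond_exp_add) auto
    moreover have "AE x in M. real_cond_exp M (G i) (\<lambda>x. \<kappa> * V (grid (Suc i)) x) x
        = \<kappa> * real_cond_exp M (G i) (V (grid (Suc i))) x"
      using R_int by (rule real_cond_exp_cmult)
    ultimately show ?thesis
      using gain_cond by eventually_elim (simp add: True)
  next
    case False
    have "AE x in M. real_cond_exp M (G i) (\<lambda>x. \<kappa> * V t x) x = real_cond_exp M (G i) (gain i t) x"
      using V_split[OF _ i] False gain_int by (intro real_cond_exp_cong) auto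
    then show ?thesis
      using gain_cond by eventually_elim (simp add: False)
  qed
  with cmult show ?thesis
    by eventually_elim simp
qed

lemma integrable_W_root_grid: "Suc i < n \<Longrightarrow> integrable M (W_root (Suc i) (grid (Suc i)))"
proof -
  assume later: "Suc i < n"
  have R: "ereal (grid (Suc i)) \<le> tt (Suc (Suc i))"
    using grid_in_seg[OF later] unfolding seg_def by (simp add: less_imp_le)
  have "W_root (Suc i) (grid (Suc i)) \<in> borel_measurable (G (Suc i))"
    unfolding W_root_def using measurable_gain_slice[OF later] by measurable
  then have "W_root (Suc i) (grid (Suc i)) \<in> borel_measurable M"
    by (rule measurable_from_subalg[OF subalgebra_G[OF later]])
  then show ?thesis
    using W_root_nonneg[OF R] W_root_le[OF R]
    by (intro integrable_const_bound[of _ "\<kappa> * exp (- \<gamma> * grid (Suc i))"]) auto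
qed

lemma cond_W_root_le_cont_root:
  assumes later: "Suc i < n"
  shows "AE x in M. real_cond_exp M (G i) (W_root (Suc i) (grid (Suc i))) x \<le> cont i x powr (1 / \<theta>)"
proof -
  interpret sigma_finite_subalgebra M "G i"
    using sigma_finite_subalgebra_G later by simp
  let ?X = "W_root (Suc i) (grid (Suc i))"
  have X_nonneg: "0 \<le> ?X x" for x
    using grid_in_seg[OF later] unfolding seg_def by (intro W_root_nonneg) (simp add: less_imp_le)
  have "AE x in M. real_cond_exp M (G i) ?X x powr \<theta> \<le> real_cond_exp M (G i) (\<lambda>x. ?X x powr \<theta>) x"
    using integrable_W_root_grid[OF later] X_nonneg integrable_W_seg_grid[OF later] theta_gt_1
    unfolding W_seg_def by (intro real_cond_exp_powr_le) auto
  moreover have "AE x in M. cont i x = real_cond_exp M (G i) (\<lambda>x. ?X x powr \<theta>) x"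
    using cont_eq_real_cond_exp[OF later] unfolding W_seg_def .
  moreover have "AE x in M. 0 \<le> real_cond_exp M (G i) ?X x"
    using integrable_W_root_grid[OF later] X_nonneg by (intro real_cond_exp_pos) auto
  ultimately show ?thesis
  proof eventually_elim
    case (elim x)
    let ?m = "real_cond_exp M (G i) ?X x"
    have "?m = (?m powr \<theta>) powr (1 / \<theta>)"
      using elim(3) theta_gt_1 by (simp add: powr_powr)
    also have "\<dots> \<le> cont i x powr (1 / \<theta>)"
      using elim(1,2) theta_gt_1 by (intro powr_mono2) auto
    finally show ?case .
  qed
qed

lemma cond_V_next_le_cont_root:
  assumes later: "Suc i < n"
    and IH: "AE x in M. \<kappa> * real_cond_exp M (G (Suc i)) (V (grid (Suc i))) x \<le> W_root (Suc i) (grid (Suc i)) x"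
  shows "AE x in M. \<kappa> * real_cond_exp M (G i) (V (grid (Suc i))) x \<le> cont i x powr (1 / \<theta>)"
proof -
  interpret sigma_finite_subalgebra M "G i"
    using sigma_finite_subalgebra_G later by simp
  let ?R = "grid (Suc i)"
  have V_int: "integrable M (V ?R)"
    using integrable_V grid_nonneg[OF later] by simp
  have V_next_int: "integrable M (real_cond_exp M (G (Suc i)) (V ?R))"
    using sigma_finite_subalgebra.real_cond_exp_int(1)[OF sigma_finite_subalgebra_G[OF later] V_int] .
  have "AE x in M. real_cond_exp M (G i) (real_cond_exp M (G (Suc i)) (V ?R)) x = real_cond_exp M (G i) (V ?R) x"
    using subalgebra_G[OF later] subalgebra_G_G[OF _ later] V_int by (intro real_cond_exp_nested_subalg) auto
  moreover have "AE x in M. real_cond_exp M (G i) (\<lambda>x. \<kappa> * real_cond_exp M (G (Suc i)) (V ?R) x) x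
      = \<kappa> * real_cond_exp M (G i) (real_cond_exp M (G (Suc i)) (V ?R)) x"
    using V_next_int by (rule real_cond_exp_cmult)
  moreover have "AE x in M. real_cond_exp M (G i) (\<lambda>x. \<kappa> * real_cond_exp M (G (Suc i)) (V ?R) x) x
      \<le> real_cond_exp M (G i) (W_root (Suc i) ?R) x"
    using IH V_next_int integrable_W_root_grid[OF later] by (intro real_cond_exp_mono) auto
  moreover note cond_W_root_le_cont_root[OF later]
  ultimately show ?thesis
    by eventually_elim simp
qed

lemma cond_V_le_W_root:
  "i < n \<Longrightarrow> t \<in> seg i \<Longrightarrow> AE x in M. \<kappa> * real_cond_exp M (G i) (V t) x \<le> W_root i t x"
proof (induction "n - i" arbitrary: i t rule: less_induct)
  case less
  note i = less.prems
  show ?case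
  proof (cases "Suc i < n")
    case True
    have "AE x in M. \<kappa> * real_cond_exp M (G (Suc i)) (V (grid (Suc i))) x \<le> W_root (Suc i) (grid (Suc i)) x"
      using less.hyps True grid_in_seg i by simp
    then have "AE x in M. \<kappa> * real_cond_exp M (G i) (V (grid (Suc i))) x \<le> cont i x powr (1 / \<theta>)"
      by (rule cond_V_next_le_cont_root[OF True])
    with cond_V_seg[OF i] show ?thesis
      unfolding W_root_def by eventually_elim (simp add: True)
  next
    case False
    from cond_V_seg[OF i] show ?thesis
      unfolding W_root_def by eventually_elim (simp add: False)
  qed
qed

lemma W_lower_bound:
  assumes "0 \<le> t"
  shows "AE x in M. (1 / (\<gamma> * \<theta>) * real_cond_exp M (F t) (V t) x) powr \<theta> \<le> W t x"
proof -
  obtain i where i: "i < n" "t \<in> seg i"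
    using seg_exists[OF assms] .
  interpret sigma_finite_subalgebra M "G i"
    using sigma_finite_subalgebra_G i by simp
  have "AE x in M. 0 \<le> real_cond_exp M (G i) (V t) x"
    using V_bounds[OF assms] by (intro real_cond_exp_pos) auto
  with cond_V_le_W_root[OF i] show ?thesis
    unfolding real_cond_exp_F_seg[OF i] \<kappa>_def[symmetric] W_eq_W_seg[OF i] W_seg_def
  proof eventually_elim
    case (elim x)
    then show ?case
      using kappa_pos theta_gt_1 by (intro powr_mono2) auto
  qed
qed

theorem proper_EZ_solution_W: "proper_EZ_solution M F \<theta> U W"
  unfolding proper_EZ_solution_def EZ_solution_def
proof (intro conjI allI impI ballI)
  show "(\<integral>\<^sup>+ x. (\<integral>\<^sup>+ s. ennreal (indicator {0..} s * h_EZ \<theta> (U s x) (W s x)) \<partial>lborel) \<partial>M) < \<infinity>"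
    using nn_integral_future_utility_finite unfolding future_utility_def .
  fix t :: real assume "0 \<le> t"
  then show "AE x in M. ennreal (W t x) =
      nn_cond_exp M (F t) (\<lambda>y. \<integral>\<^sup>+ s. ennreal (indicator {t..} s * h_EZ \<theta> (U s y) (W s y)) \<partial>lborel) x"
    using W_eq_cond_future_utility unfolding future_utility_def by simp
qed (use W_nonneg cadlag_W prog_measurable_W W_pos_if_cond_utility_pos in auto)

end

theorem propositionA2:
  fixes M :: "'a measure" and F :: "real \<Rightarrow> 'a measure"
    and tt :: "nat \<Rightarrow> ereal" and n :: nat and \<tau> :: "'a \<Rightarrow> ereal" and \<theta> \<gamma> :: real
  assumes "prob_space M"
    and "\<theta> > 1"
    and "filtration_on M F"
    and "tt 0 = 0" and "\<forall>i<n. tt i < tt (Suc i)" and "tt n = \<infinity>"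
    and "\<forall>s\<ge>0. \<forall>i<n. tt i \<le> ereal s \<and> ereal s < tt (Suc i) \<longrightarrow>
            sets (F s) = sets (F (real_of_ereal (tt i)))"
    and "FT_stopping_time M F tt n \<tau>"
    and "\<gamma> > 0"
  shows "\<exists>W. proper_EZ_solution M F \<theta>
              (\<lambda>s x. exp (- \<gamma> * s) * (if ereal s < \<tau> x then 1 else 0)) W \<and>
            (\<forall>t\<ge>0. AE x in M.
               W t x \<ge> (1 / (\<gamma> * \<theta>) *
                 real_cond_exp M (F t)
                   (\<lambda>y. exp (- \<gamma> * t) -
                        (if \<tau> y = \<infinity> then 0 else exp (- \<gamma> * max t (real_of_ereal (\<tau> y))))) x)
                 powr \<theta>)"
proof -
  interpret EZ_grid M F tt n \<tau> \<theta> \<gamma>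
    using assms unfolding EZ_grid_def EZ_grid_axioms_def by blast
  show ?thesis
  proof (intro exI[of _ W] conjI allI impI)
    show "proper_EZ_solution M F \<theta> (\<lambda>s x. exp (- \<gamma> * s) * (if ereal s < \<tau> x then 1 else 0)) W"
      using proper_EZ_solution_W unfolding U_def[abs_def] .
    fix t :: real assume "0 \<le> t"
    then show "AE x in M. W t x \<ge> (1 / (\<gamma> * \<theta>) * real_cond_exp M (F t)
        (\<lambda>y. exp (- \<gamma> * t) - (if \<tau> y = \<infinity> then 0 else exp (- \<gamma> * max t (real_of_ereal (\<tau> y))))) x) powr \<theta>"
      using W_lower_bound unfolding V_def[abs_def] by simp
  qed
qed

end
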